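(* As $\omega\to0^+$, the fundamental solution $\boldsymbol\Gamma^\omega$ has the asymptotic expansion $$\boldsymbol\Gamma^\omega(\mathbf{x})=\boldsymbol\Gamma(\mathbf{x})+\gamma_\omega\mathbf{I}_2+\omega^2\ln\omega\,\rho\boldsymbol\Gamma_1(\mathbf{x})+\omega^2\rho\ln\sqrt\rho\,\boldsymbol\Gamma_1(\mathbf{x})+\omega^2\rho\boldsymbol\Gamma_2(\mathbf{x})+\mathcal{O}(\omega^4\ln\omega+\omega^4),$$ where $\boldsymbol\Gamma_1(\mathbf{x})=\beta_2|\mathbf{x}|^2\mathbf{I}_2+\beta_3\mathbf{x}\mathbf{x}^T$, $\boldsymbol\Gamma_2(\mathbf{x})=\beta_1|\mathbf{x}|^2\mathbf{I}_2+\beta_2\ln|\mathbf{x}||\mathbf{x}|^2\mathbf{I}_2+\beta_3\ln|\mathbf{x}|\mathbf{x}\mathbf{x}^T+\beta_4\mathbf{x}\mathbf{x}^T$, $\gamma_\omega=\alpha_1\ln(\sqrt\rho\,\omega)+\alpha$ with $\alpha=\frac{\alpha_1}2E_c+\frac{\alpha_2}2-\frac1{8\pi}\big(\frac1\mu\ln\mu+\frac1{2\mu+\lambda}\ln(2\mu+\lambda)\big)$, and $\beta_1=(\frac12E_c-1)\beta_2-\frac18\beta_3+\frac1{2^6\pi}\big(\frac3{\mu^2}\ln\mu+\frac1{(2\mu+\lambda)^2}\ln(2\mu+\lambda)\big)$, $\beta_2=-\frac1{2^5\pi}\big(\frac3{\mu^2}+\frac1{(2\mu+\lambda)^2}\big)$,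 $\beta_3=\frac1{2^4\pi}\big(\frac1{\mu^2}-\frac1{(2\mu+\lambda)^2}\big)$, $\beta_4=\frac14(2E_c-3)\beta_3-\frac1{2^5\pi}\big(\frac1{\mu^2}\ln\mu-\frac1{(2\mu+\lambda)^2}\ln(2\mu+\lambda)\big)$.
   Context: Lamé constants $\lambda,\mu$, density $\rho>0$; $c_s=\sqrt{\mu/\rho}$, $c_p=\sqrt{(\lambda+2\mu)/\rho}$, $k_s=\omega/c_s$, $k_p=\omega/c_p$. The fundamental solution of $\mu\Delta+(\lambda+\mu)\nabla\nabla\cdot+\omega^2\rho$ in $\mathbb{R}^2$ is $\boldsymbol\Gamma^\omega(\mathbf{x})=-\frac{\mathrm{i}}{4\mu}H_0^{(1)}(k_s|\mathbf{x}|)\mathbf{I}_2+\frac{\mathrm{i}}{4\omega^2\rho}\nabla\nabla\big(H_0^{(1)}(k_p|\mathbf{x}|)-H_0^{(1)}(k_s|\mathbf{x}|)\big)$. $\boldsymbol\Gamma(\mathbf{x})=\alpha_1\ln|\mathbf{x}|\mathbf{I}_2-\alpha_2\frac{\mathbf{x}\mathbf{x}^T}{|\mathbf{x}|^2}$, $\alpha_1=\frac1{4\pi}(\frac1\mu+\frac1{2\mu+\lambda})$, $\alpha_2=\frac1{4\pi}(\frac1\mu-\frac1{2\mu+\lambda})$. $E_c=2\gamma-\mathrm{i}\pi-2\ln2$, $\gamma$ Euler's constant. *)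

theory Defs
  imports "HOL-Analysis.Analysis" "HOL-Library.Landau_Symbols"
begin

text \<open>Bessel functions of order zero for a positive real argument (DLMF 10.2.2, 10.8.2),
  and the Hankel function of the first kind of order zero.\<close>

definition besselJ0 :: "real \<Rightarrow> real" where
  "besselJ0 z = (\<Sum>k. (-1)^k * (z/2)^(2*k) / (fact k)^2)"

definition besselY0 :: "real \<Rightarrow> real" where
  "besselY0 z = 2/pi * (ln (z/2) + euler_mascheroni) * besselJ0 z
     + 2/pi * (\<Sum>k. (-1)^(k+2) * harm (k+1) * (z/2)^(2*(k+1)) / (fact (k+1))^2)"

definition hankel10 :: "real \<Rightarrow> complex" where
  "hankel10 z = Complex (besselJ0 z) (besselY0 z)"

definition hessian2 :: "(real^2 \<Rightarrow> complex) \<Rightarrow> real^2 \<Rightarrow> complex^2^2" where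
  "hessian2 g x = (\<chi> i j. vector_derivative
      (\<lambda>t. vector_derivative (\<lambda>s. g (x + t *\<^sub>R axis i 1 + s *\<^sub>R axis j 1)) (at 0)) (at 0))"

definition cscale :: "complex \<Rightarrow> complex^2^2 \<Rightarrow> complex^2^2" where
  "cscale c A = (\<chi> i j. c * A$i$j)"

definition Imat :: "complex^2^2" where
  "Imat = mat 1"

definition outer :: "real^2 \<Rightarrow> complex^2^2" where
  "outer x = (\<chi> i j. complex_of_real (x$i * x$j))"

text \<open>Physical parameters: Lame constants lam, mu, density rho, frequency omega.\<close>

definition k_s :: "real \<Rightarrow> real \<Rightarrow> real \<Rightarrow> real \<Rightarrow> real" where
  "k_s lam mu rho \<omega> = \<omega> / sqrt (mu / rho)"

definition k_p :: "real \<Rightarrow> real \<Rightarrow> real \<Rightarrow> real \<Rightarrow> real" where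
  "k_p lam mu rho \<omega> = \<omega> / sqrt ((lam + 2*mu) / rho)"

definition Gamma_omega :: "real \<Rightarrow> real \<Rightarrow> real \<Rightarrow> real \<Rightarrow> real^2 \<Rightarrow> complex^2^2" where
  "Gamma_omega lam mu rho \<omega> x =
     cscale (- \<i> / (4 * mu) * hankel10 (k_s lam mu rho \<omega> * norm x)) Imat
   + cscale (\<i> / (4 * \<omega>^2 * rho))
       (hessian2 (\<lambda>y. hankel10 (k_p lam mu rho \<omega> * norm y) - hankel10 (k_s lam mu rho \<omega> * norm y)) x)"

definition alpha1 :: "real \<Rightarrow> real \<Rightarrow> real" where
  "alpha1 lam mu = 1/(4*pi) * (1/mu + 1/(2*mu + lam))"

definition alpha2 :: "real \<Rightarrow> real \<Rightarrow> real" where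
  "alpha2 lam mu = 1/(4*pi) * (1/mu - 1/(2*mu + lam))"

definition Gamma0 :: "real \<Rightarrow> real \<Rightarrow> real^2 \<Rightarrow> complex^2^2" where
  "Gamma0 lam mu x = cscale (alpha1 lam mu * ln (norm x)) Imat
     - cscale (alpha2 lam mu / (norm x)^2) (outer x)"

definition Ec :: complex where
  "Ec = 2 * euler_mascheroni - \<i> * pi - 2 * ln 2"

definition alpha_c :: "real \<Rightarrow> real \<Rightarrow> complex" where
  "alpha_c lam mu = alpha1 lam mu / 2 * Ec + alpha2 lam mu / 2
     - 1/(8*pi) * (1/mu * ln mu + 1/(2*mu + lam) * ln (2*mu + lam))"

definition gamma_omega :: "real \<Rightarrow> real \<Rightarrow> real \<Rightarrow> real \<Rightarrow> complex" where
  "gamma_omega lam mu rho \<omega> = alpha1 lam mu * ln (sqrt rho * \<omega>) + alpha_c lam mu"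

definition beta2 :: "real \<Rightarrow> real \<Rightarrow> real" where
  "beta2 lam mu = - 1/(2^5*pi) * (3/mu^2 + 1/(2*mu + lam)^2)"

definition beta3 :: "real \<Rightarrow> real \<Rightarrow> real" where
  "beta3 lam mu = 1/(2^4*pi) * (1/mu^2 - 1/(2*mu + lam)^2)"

definition beta1 :: "real \<Rightarrow> real \<Rightarrow> complex" where
  "beta1 lam mu = (1/2 * Ec - 1) * beta2 lam mu - 1/8 * beta3 lam mu
     + 1/(2^6*pi) * (3/mu^2 * ln mu + 1/(2*mu + lam)^2 * ln (2*mu + lam))"

definition beta4 :: "real \<Rightarrow> real \<Rightarrow> complex" where
  "beta4 lam mu = 1/4 * (2 * Ec - 3) * beta3 lam mu
     - 1/(2^5*pi) * (1/mu^2 * ln mu - 1/(2*mu + lam)^2 * ln (2*mu + lam))"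

definition Gamma1 :: "real \<Rightarrow> real \<Rightarrow> real^2 \<Rightarrow> complex^2^2" where
  "Gamma1 lam mu x = cscale (beta2 lam mu * (norm x)^2) Imat + cscale (beta3 lam mu) (outer x)"

definition Gamma2 :: "real \<Rightarrow> real \<Rightarrow> real^2 \<Rightarrow> complex^2^2" where
  "Gamma2 lam mu x = cscale (beta1 lam mu * (norm x)^2) Imat
     + cscale (beta2 lam mu * ln (norm x) * (norm x)^2) Imat
     + cscale (beta3 lam mu * ln (norm x)) (outer x)
     + cscale (beta4 lam mu) (outer x)"

end

theory Submission
  imports Defs "HOL-Real_Asymp.Real_Asymp"
begin

(* Write u = z^2. With P(u) = J_0(sqrt u) = sum_n (-u/4)^n / (n!)^2 and the second power series Q(u)
   occurring in Y_0, one has H_0^(1)(sqrt u) = P + (2i/pi) ((ln (sqrt u / 2) + gamma) P + Q), and the first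
   two u-derivatives have the same shape. The Hessian of a radial function F(|x|^2) is
   4 F''(|x|^2) x x^T + 2 F'(|x|^2) I, so Gamma^omega = a(omega) I + b(omega) x x^T, where a involves H and H'
   and b involves H'' at u = omega^2 rho |x|^2 / mu and u = omega^2 rho |x|^2 / (2 mu + lambda).
   Replacing P and Q by their first Taylor terms turns a and b into exactly the coefficients of the claimed
   expansion. The neglected tails are O(u^2 ln u) in H and H' and O(u ln u) in H'', and b carries an extra
   factor omega^2, so both errors are O(omega^4 ln omega). *)

section \<open>Power series with infinite radius of convergence\<close>

definition pser :: "(nat \<Rightarrow> real) \<Rightarrow> real \<Rightarrow> real" where
  "pser c u = (\<Sum>n. c n * u^n)"

definition entire_coeffs :: "(nat \<Rightarrow> real) \<Rightarrow> bool" where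
  "entire_coeffs c \<longleftrightarrow> (\<forall>u. summable (\<lambda>n. c n * u^n))"

lemma entire_coeffs_diffs: "entire_coeffs c \<Longrightarrow> entire_coeffs (diffs c)"
  unfolding entire_coeffs_def by (blast intro: termdiff_converges_all)

lemma entire_coeffs_shift: "entire_coeffs c \<Longrightarrow> entire_coeffs (\<lambda>n. c (n + N))"
  unfolding entire_coeffs_def by (simp add: summable_powser_ignore_initial_segment)

lemma entire_coeffsI_fact_bound:
  assumes "\<And>n. \<bar>c n\<bar> \<le> 1 / fact n"
  shows "entire_coeffs c"
  unfolding entire_coeffs_def
proof
  fix u :: real
  show "summable (\<lambda>n. c n * u^n)"
  proof (rule summable_comparison_test'[OF summable_exp[of "\<bar>u\<bar>"]])
    fix n
    show "norm (c n * u^n) \<le> inverse (fact n) * \<bar>u\<bar>^n"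
      using mult_right_mono[OF assms[of n], of "\<bar>u\<bar>^n"]
      by (simp add: abs_mult power_abs divide_inverse)
  qed
qed

lemma has_real_derivative_pser:
  "entire_coeffs c \<Longrightarrow> (pser c has_real_derivative pser (diffs c) u) (at u)"
  unfolding entire_coeffs_def pser_def[abs_def]
  by (rule termdiffs_strong_converges_everywhere) blast

lemma has_real_derivative_pser_chain [derivative_intros]:
  "entire_coeffs c \<Longrightarrow> (f has_real_derivative f') (at x) \<Longrightarrow>
    ((\<lambda>x. pser c (f x)) has_real_derivative pser (diffs c) (f x) * f') (at x)"
  by (rule DERIV_chain2[OF has_real_derivative_pser])

lemma pser_split:
  assumes "entire_coeffs c"
  shows "pser c u = (\<Sum>n<N. c n * u^n) + u^N * pser (\<lambda>n. c (n + N)) u"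
proof -
  have "summable (\<lambda>n. c (n + N) * u^n)"
    using entire_coeffs_shift[OF assms] by (simp add: entire_coeffs_def)
  then have "u^N * pser (\<lambda>n. c (n + N)) u = (\<Sum>n. c (n + N) * u^(n + N))"
    unfolding pser_def by (subst suminf_mult[symmetric]) (simp_all add: power_add mult_ac)
  moreover have "pser c u = (\<Sum>n. c (n + N) * u^(n + N)) + (\<Sum>n<N. c n * u^n)"
    using assms unfolding pser_def entire_coeffs_def by (intro suminf_split_initial_segment) blast
  ultimately show ?thesis by simp
qed

lemma pser_remainder_bigo:
  assumes "entire_coeffs c"
  shows "(\<lambda>u. pser c u - (\<Sum>n<N. c n * u^n)) \<in> O[at_right 0](\<lambda>u. u^N)"
proof -
  let ?d = "\<lambda>n. c (n + N)"
  have "isCont (pser ?d) 0"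
    using entire_coeffs_shift[OF assms] unfolding entire_coeffs_def pser_def[abs_def]
    by (intro isCont_powser_converges_everywhere) blast
  then have "(pser ?d \<longlongrightarrow> pser ?d 0) (at_right 0)"
    by (simp add: isCont_def filterlim_at_split)
  then have "pser ?d \<in> O[at_right 0](\<lambda>_. 1)"
    by (intro bigoI_tendsto[where c = "pser ?d 0"]) simp_all
  then have "(\<lambda>u. u^N * pser ?d u) \<in> O[at_right 0](\<lambda>u. u^N * 1)"
    by (rule landau_o.big.mult_left)
  then show ?thesis
    by (simp add: pser_split[OF assms, of _ N])
qed

lemma pser_remainder_div_bigo:
  assumes "entire_coeffs c" and "d \<noteq> 0" and "k \<le> M"
  shows "(\<lambda>u. (pser c u - (\<Sum>n<M. c n * u^n)) / (d * u^k)) \<in> O[at_right 0](\<lambda>u. u^(M - k))"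
proof -
  have "(\<lambda>u. (pser c u - (\<Sum>n<M. c n * u^n)) / (d * u^k)) \<in> O[at_right 0](\<lambda>u. u^M / (d * u^k))"
    using assms
    by (intro landau_o.big.divide_right pser_remainder_bigo eventually_mono[OF eventually_at_right_less]) simp_all
  moreover have "\<forall>\<^sub>F u in at_right 0. inverse d * u^(M - k) = u^M / (d * u^k)"
  proof (rule eventually_mono[OF eventually_at_right_less])
    fix u :: real
    assume "0 < u"
    then have "u^M = u^(M - k) * u^k"
      using assms(3) by (simp flip: power_add)
    then show "inverse d * u^(M - k) = u^M / (d * u^k)"
      using \<open>0 < u\<close> by (simp add: divide_inverse)
  qed
  then have "(\<lambda>u. u^M / (d * u^k)) \<in> O[at_right 0](\<lambda>u. u^(M - k))"
    by (rule landau_o.big.in_cong[THEN iffD1]) simp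
  ultimately show ?thesis
    by (rule landau_o.big_trans)
qed

section \<open>The Bessel series\<close>

definition j0_coeff :: "nat \<Rightarrow> real" where
  "j0_coeff n = (-1)^n / (4^n * (fact n)^2)"

definition y0_coeff :: "nat \<Rightarrow> real" where
  "y0_coeff n = (-1)^(n+1) * harm n / (4^n * (fact n)^2)"

lemma bessel_coeff_le_inverse_fact:
  fixes a :: real
  assumes "0 \<le> a" "a \<le> 4^n * fact n"
  shows "a / (4^n * (fact n)^2) \<le> 1 / fact n"
proof -
  have "a / (4^n * (fact n)^2) = (a / (4^n * fact n)) * (1 / fact n)"
    by (simp add: power2_eq_square)
  also have "\<dots> \<le> 1 * (1 / fact n)"
    using assms by (intro mult_right_mono) simp_all
  finally show ?thesis by simp
qed

lemma entire_j0_coeff: "entire_coeffs j0_coeff"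
proof (rule entire_coeffsI_fact_bound)
  fix n
  have "(1::real) * 1 \<le> 4^n * fact n"
    by (rule mult_mono) simp_all
  then show "\<bar>j0_coeff n\<bar> \<le> 1 / fact n"
    unfolding j0_coeff_def using bessel_coeff_le_inverse_fact[of 1 n] by (simp add: abs_divide)
qed

lemma harm_le: "harm n \<le> (real n)"
proof -
  have "harm n \<le> (\<Sum>k=1..n. (1::real))"
    unfolding harm_def by (intro sum_mono) (auto simp: inverse_le_1_iff)
  then show ?thesis by simp
qed

lemma entire_y0_coeff: "entire_coeffs y0_coeff"
proof (rule entire_coeffsI_fact_bound)
  fix n
  have "harm n \<le> (fact n :: real)"
    using harm_le[of n] fact_ge_self[of n] by (metis of_nat_fact of_nat_le_iff order_trans)
  also have "\<dots> \<le> 4^n * fact n" by simp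
  finally show "\<bar>y0_coeff n\<bar> \<le> 1 / fact n"
    unfolding y0_coeff_def using bessel_coeff_le_inverse_fact[of "harm n" n] harm_nonneg[of n]
    by (simp add: abs_divide abs_mult)
qed

lemmas entire_bessel_coeffs =
  entire_j0_coeff entire_y0_coeff
  entire_coeffs_diffs[OF entire_j0_coeff] entire_coeffs_diffs[OF entire_y0_coeff]
  entire_coeffs_diffs[OF entire_coeffs_diffs[OF entire_j0_coeff]]
  entire_coeffs_diffs[OF entire_coeffs_diffs[OF entire_y0_coeff]]

lemma bessel_partial_sums:
  "(\<Sum>n<2. j0_coeff n * u^n) = 1 - u/4"
  "(\<Sum>n<3. j0_coeff n * u^n) = 1 - u/4 + u^2/64"
  "(\<Sum>n<2. y0_coeff n * u^n) = u/4"
  "(\<Sum>n<2. diffs j0_coeff n * u^n) = u/32 - 1/4"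
  "(\<Sum>n<2. diffs y0_coeff n * u^n) = 1/4 - 3*u/64"
  "(\<Sum>n<1. diffs (diffs j0_coeff) n * u^n) = 1/32"
  "(\<Sum>n<1. diffs (diffs y0_coeff) n * u^n) = -3/64"
  by (simp_all add: j0_coeff_def y0_coeff_def diffs_def eval_nat_numeral harm_def field_simps)

lemma besselJ0_eq_pser: "besselJ0 z = pser j0_coeff (z^2)"
  unfolding besselJ0_def pser_def j0_coeff_def
  by (simp add: power_mult power_divide)

lemma besselY0_eq_pser:
  "besselY0 z = 2/pi * ((ln (z/2) + euler_mascheroni) * pser j0_coeff (z^2) + pser y0_coeff (z^2))"
proof -
  have "summable (\<lambda>n. y0_coeff n * (z^2)^n)"
    using entire_y0_coeff by (simp add: entire_coeffs_def)
  then have "pser y0_coeff (z^2) = (\<Sum>k. y0_coeff (Suc k) * (z^2)^(Suc k))"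
    unfolding pser_def by (subst suminf_split_head) (simp_all add: y0_coeff_def harm_def)
  also have "\<dots> = (\<Sum>k. (-1)^(k+2) * harm (k+1) * (z/2)^(2*(k+1)) / (fact (k+1))^2)"
    by (simp only: power_mult power_divide) (simp add: y0_coeff_def)
  finally show ?thesis
    unfolding besselY0_def besselJ0_eq_pser by (simp add: algebra_simps)
qed

section \<open>The Hankel function as a function of the squared argument\<close>

definition bessel_log :: "real \<Rightarrow> real" where
  "bessel_log u = ln u / 2 - ln 2 + euler_mascheroni"

text \<open>All functions below have the form \<open>J + i Y\<close> with \<open>Y = (2/pi) (l J + K)\<close>, where
  \<open>l = bessel_log u = ln (sqrt u / 2) + gamma\<close>: \<open>hankel_sq u\<close> is \<open>H_0^(1)(sqrt u)\<close>, and
  \<open>hankel_sq'\<close>, \<open>hankel_sq''\<close> are its first two derivatives in \<open>u\<close>.\<close>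

definition hankel_comb :: "real \<Rightarrow> real \<Rightarrow> real \<Rightarrow> complex" where
  "hankel_comb l a b = complex_of_real a + \<i> * complex_of_real (2 / pi * (l * a + b))"

lemma hankel_comb_diff:
  "hankel_comb l a b - hankel_comb l a' b' = hankel_comb l (a - a') (b - b')"
  by (simp add: hankel_comb_def algebra_simps)

definition hankel_sq :: "real \<Rightarrow> complex" where
  "hankel_sq u = hankel_comb (bessel_log u) (pser j0_coeff u) (pser y0_coeff u)"

definition hankel_sq' :: "real \<Rightarrow> complex" where
  "hankel_sq' u = hankel_comb (bessel_log u) (pser (diffs j0_coeff) u)
     (pser j0_coeff u / (2*u) + pser (diffs y0_coeff) u)"

definition hankel_sq'' :: "real \<Rightarrow> complex" where
  "hankel_sq'' u = hankel_comb (bessel_log u) (pser (diffs (diffs j0_coeff)) u)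
     (pser (diffs j0_coeff) u / u - pser j0_coeff u / (2*u^2) + pser (diffs (diffs y0_coeff)) u)"

lemma hankel10_eq_hankel_sq:
  assumes "z > 0"
  shows "hankel10 z = hankel_sq (z^2)"
proof -
  have "bessel_log (z^2) = ln (z/2) + euler_mascheroni"
    using assms by (simp add: bessel_log_def ln_div ln_realpow)
  then show ?thesis
    unfolding hankel10_def hankel_sq_def hankel_comb_def besselJ0_eq_pser besselY0_eq_pser
    by (simp add: Complex_eq)
qed

lemma has_vector_derivative_hankel_comb:
  assumes "u > 0"
    and "(A has_real_derivative A') (at u)" and "(B has_real_derivative B') (at u)"
  shows "((\<lambda>v. hankel_comb (bessel_log v) (A v) (B v)) has_vector_derivative
           hankel_comb (bessel_log u) A' (A u / (2*u) + B')) (at u)"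
proof -
  have "(bessel_log has_real_derivative 1 / (2*u)) (at u)"
    unfolding bessel_log_def[abs_def] using assms(1) by (auto intro!: derivative_eq_intros)
  then have "((\<lambda>v. 2 / pi * (bessel_log v * A v + B v)) has_real_derivative
      2 / pi * (bessel_log u * A' + (A u / (2*u) + B'))) (at u)"
    using assms by (auto intro!: derivative_eq_intros simp: field_simps)
  then show ?thesis
    unfolding hankel_comb_def
    by (intro has_vector_derivative_add has_vector_derivative_mult_right has_vector_derivative_of_real assms(2))
qed

lemma has_vector_derivative_hankel_sq:
  "u > 0 \<Longrightarrow> (hankel_sq has_vector_derivative hankel_sq' u) (at u)"
  unfolding hankel_sq_def[abs_def] hankel_sq'_def
  by (intro has_vector_derivative_hankel_comb has_real_derivative_pser entire_bessel_coeffs)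

lemma has_vector_derivative_hankel_sq':
  assumes "u > 0"
  shows "(hankel_sq' has_vector_derivative hankel_sq'' u) (at u)"
proof -
  let ?B = "\<lambda>t. pser j0_coeff t / (2*t) + pser (diffs y0_coeff) t"
  let ?B' = "pser (diffs j0_coeff) u / (2*u) - pser j0_coeff u / (2*u^2) + pser (diffs (diffs y0_coeff)) u"
  have "(?B has_real_derivative ?B') (at u)"
    using assms by (auto intro!: derivative_eq_intros simp: entire_bessel_coeffs field_simps power2_eq_square)
  then have "(hankel_sq' has_vector_derivative hankel_comb (bessel_log u) (pser (diffs (diffs j0_coeff)) u)
      (pser (diffs j0_coeff) u / (2*u) + ?B')) (at u)"
    unfolding hankel_sq'_def[abs_def]
    by (intro has_vector_derivative_hankel_comb assms has_real_derivative_pser entire_bessel_coeffs)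
  moreover have "pser (diffs j0_coeff) u / (2*u) + ?B'
      = pser (diffs j0_coeff) u / u - pser j0_coeff u / (2*u^2) + pser (diffs (diffs y0_coeff)) u"
    by simp
  ultimately show ?thesis
    unfolding hankel_sq''_def by simp
qed

section \<open>Hessians of radial functions\<close>

lemma has_vector_derivative_along_line_sq:
  fixes y v :: "'a::real_inner"
  assumes "(F has_vector_derivative F') (at (y \<bullet> y))"
  shows "((\<lambda>s. F ((y + s *\<^sub>R v) \<bullet> (y + s *\<^sub>R v))) has_vector_derivative (2 * (y \<bullet> v)) *\<^sub>R F') (at 0)"
proof -
  define \<phi> where "\<phi> s = y \<bullet> y + 2 * s * (y \<bullet> v) + s^2 * (v \<bullet> v)" for s
  have \<phi>_eq: "(y + s *\<^sub>R v) \<bullet> (y + s *\<^sub>R v) = \<phi> s" for s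
    unfolding \<phi>_def by (simp add: inner_add_left inner_add_right inner_commute power2_eq_square algebra_simps)
  have "(\<phi> has_vector_derivative 2 * (y \<bullet> v)) (at 0)"
    unfolding \<phi>_def[abs_def] has_real_derivative_iff_has_vector_derivative[symmetric]
    by (auto intro!: derivative_eq_intros)
  then have "((F \<circ> \<phi>) has_vector_derivative (2 * (y \<bullet> v)) *\<^sub>R F') (at 0)"
    using assms by (intro vector_diff_chain_at) (simp_all add: \<phi>_def)
  then show ?thesis
    by (simp add: \<phi>_eq o_def)
qed

lemma add_scaleR_unit_neq_0:
  fixes y v :: "'a::real_normed_vector"
  assumes "norm v = 1" and "\<bar>s\<bar> < norm y"
  shows "y + s *\<^sub>R v \<noteq> 0"
  using assms norm_triangle_ineq2[of y "- s *\<^sub>R v"] by auto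

lemma has_vector_derivative_radial_along_line:
  fixes y v :: "'a::real_inner"
  assumes g: "\<And>z. z \<noteq> 0 \<Longrightarrow> g z = F (z \<bullet> z)"
    and F: "(F has_vector_derivative F') (at (y \<bullet> y))"
    and y: "y \<noteq> 0" and v: "norm v = 1"
  shows "((\<lambda>s. g (y + s *\<^sub>R v)) has_vector_derivative (2 * (y \<bullet> v)) *\<^sub>R F') (at 0)"
proof (rule has_vector_derivative_transform_within_open[where S = "ball 0 (norm y)"])
  show "((\<lambda>s. F ((y + s *\<^sub>R v) \<bullet> (y + s *\<^sub>R v))) has_vector_derivative (2 * (y \<bullet> v)) *\<^sub>R F') (at 0)"
    by (rule has_vector_derivative_along_line_sq[OF F])
  show "F ((y + s *\<^sub>R v) \<bullet> (y + s *\<^sub>R v)) = g (y + s *\<^sub>R v)" if "s \<in> ball 0 (norm y)" for s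
    using that g add_scaleR_unit_neq_0[OF v] by simp
qed (use y in auto)

lemma hessian2_radial:
  fixes F F' F'' :: "real \<Rightarrow> complex" and g :: "real^2 \<Rightarrow> complex"
  assumes g: "\<And>y. y \<noteq> 0 \<Longrightarrow> g y = F (y \<bullet> y)"
    and F: "\<And>q. q > 0 \<Longrightarrow> (F has_vector_derivative F' q) (at q)"
    and F': "\<And>q. q > 0 \<Longrightarrow> (F' has_vector_derivative F'' q) (at q)"
    and x: "x \<noteq> 0"
  shows "hessian2 g x = cscale (4 * F'' (x \<bullet> x)) (outer x) + cscale (2 * F' (x \<bullet> x)) Imat"
proof -
  have entry: "hessian2 g x $ i $ j = 4 * F'' (x \<bullet> x) * of_real (x$i * x$j)
      + 2 * F' (x \<bullet> x) * (if i = j then 1 else 0)" for i j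
  proof -
    define ei ej where "ei = axis i (1::real)" and "ej = axis j (1::real)"
    have unit: "norm ei = 1" "norm ej = 1"
      by (simp_all add: ei_def ej_def)
    have inner: "vector_derivative (\<lambda>s. g (x + t *\<^sub>R ei + s *\<^sub>R ej)) (at 0)
        = (2 * ((x + t *\<^sub>R ei) \<bullet> ej)) *\<^sub>R F' ((x + t *\<^sub>R ei) \<bullet> (x + t *\<^sub>R ei))"
      if "t \<in> ball 0 (norm x)" for t
      using that add_scaleR_unit_neq_0[OF unit(1), of t x]
      by (intro vector_derivative_at has_vector_derivative_radial_along_line[OF g F _ unit(2)]) auto
    have "((\<lambda>t. F' ((x + t *\<^sub>R ei) \<bullet> (x + t *\<^sub>R ei))) has_vector_derivative
        (2 * (x \<bullet> ei)) *\<^sub>R F'' (x \<bullet> x)) (at 0)"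
      using x by (intro has_vector_derivative_along_line_sq F') simp
    moreover have "((\<lambda>t. 2 * ((x + t *\<^sub>R ei) \<bullet> ej)) has_real_derivative 2 * (ei \<bullet> ej)) (at 0)"
      by (auto intro!: derivative_eq_intros simp: inner_add_left)
    ultimately have "((\<lambda>t. (2 * ((x + t *\<^sub>R ei) \<bullet> ej)) *\<^sub>R F' ((x + t *\<^sub>R ei) \<bullet> (x + t *\<^sub>R ei)))
        has_vector_derivative (2 * (x \<bullet> ej)) *\<^sub>R ((2 * (x \<bullet> ei)) *\<^sub>R F'' (x \<bullet> x))
          + (2 * (ei \<bullet> ej)) *\<^sub>R F' (x \<bullet> x)) (at 0)"
      by (auto dest: has_vector_derivative_scaleR)
    then have "((\<lambda>t. vector_derivative (\<lambda>s. g (x + t *\<^sub>R ei + s *\<^sub>R ej)) (at 0))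
        has_vector_derivative (2 * (x \<bullet> ej)) *\<^sub>R ((2 * (x \<bullet> ei)) *\<^sub>R F'' (x \<bullet> x))
          + (2 * (ei \<bullet> ej)) *\<^sub>R F' (x \<bullet> x)) (at 0)"
      by (rule has_vector_derivative_transform_within_open[where S = "ball 0 (norm x)"])
         (use x inner in auto)
    moreover have "axis i (1::real) $ j = (if i = j then 1 else 0)"
      by (simp add: axis_def)
    ultimately show ?thesis
      unfolding hessian2_def
      by (simp add: vector_derivative_at ei_def ej_def inner_axis scaleR_conv_of_real algebra_simps)
  qed
  show ?thesis
    by (simp add: vec_eq_iff entry cscale_def outer_def Imat_def mat_def)
qed

lemma hankel10_radial:
  fixes y :: "'a::real_inner"
  assumes "k > 0" and "y \<noteq> 0"
  shows "hankel10 (k * norm y) = hankel_sq (k^2 * (y \<bullet> y))"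
  using hankel10_eq_hankel_sq[of "k * norm y"] assms by (simp add: power_mult_distrib power2_norm_eq_inner)

lemma has_vector_derivative_scaled_arg:
  "(h has_vector_derivative h') (at (c * q)) \<Longrightarrow>
    ((\<lambda>q. h (c * q)) has_vector_derivative complex_of_real c * h') (at q)"
  using vector_diff_chain_at[of "\<lambda>q. c * q" c q h h']
  by (simp add: o_def scaleR_conv_of_real has_real_derivative_iff_has_vector_derivative[symmetric]
      DERIV_cmult_Id)

lemma hessian2_hankel10_diff:
  fixes x :: "real^2"
  assumes kp: "kp > 0" and ks: "ks > 0" and x: "x \<noteq> 0"
  shows "hessian2 (\<lambda>y. hankel10 (kp * norm y) - hankel10 (ks * norm y)) x
    = cscale (4 * (of_real (kp^4) * hankel_sq'' (kp^2 * (x \<bullet> x)) - of_real (ks^4) * hankel_sq'' (ks^2 * (x \<bullet> x))))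
        (outer x)
      + cscale (2 * (of_real (kp^2) * hankel_sq' (kp^2 * (x \<bullet> x)) - of_real (ks^2) * hankel_sq' (ks^2 * (x \<bullet> x))))
        Imat"
proof (rule hessian2_radial[where F = "\<lambda>q. hankel_sq (kp^2 * q) - hankel_sq (ks^2 * q)"
      and F' = "\<lambda>q. of_real (kp^2) * hankel_sq' (kp^2 * q) - of_real (ks^2) * hankel_sq' (ks^2 * q)"
      and F'' = "\<lambda>q. of_real (kp^4) * hankel_sq'' (kp^2 * q) - of_real (ks^4) * hankel_sq'' (ks^2 * q)", OF _ _ _ x])
  show "hankel10 (kp * norm y) - hankel10 (ks * norm y)
      = hankel_sq (kp^2 * (y \<bullet> y)) - hankel_sq (ks^2 * (y \<bullet> y))" if "y \<noteq> 0" for y :: "real^2"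
    by (simp only: hankel10_radial[OF kp that] hankel10_radial[OF ks that])
  show "((\<lambda>q. hankel_sq (kp^2 * q) - hankel_sq (ks^2 * q)) has_vector_derivative
      of_real (kp^2) * hankel_sq' (kp^2 * q) - of_real (ks^2) * hankel_sq' (ks^2 * q)) (at q)" if "q > 0" for q
    using that kp ks
    by (intro has_vector_derivative_diff has_vector_derivative_scaled_arg has_vector_derivative_hankel_sq) simp_all
  show "((\<lambda>q. of_real (kp^2) * hankel_sq' (kp^2 * q) - of_real (ks^2) * hankel_sq' (ks^2 * q))
      has_vector_derivative
      of_real (kp^4) * hankel_sq'' (kp^2 * q) - of_real (ks^4) * hankel_sq'' (ks^2 * q)) (at q)" if "q > 0" for q
  proof (rule has_vector_derivative_eq_rhs)
    show "((\<lambda>q. of_real (kp^2) * hankel_sq' (kp^2 * q) - of_real (ks^2) * hankel_sq' (ks^2 * q))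
        has_vector_derivative of_real (kp^2) * (of_real (kp^2) * hankel_sq'' (kp^2 * q))
          - of_real (ks^2) * (of_real (ks^2) * hankel_sq'' (ks^2 * q))) (at q)"
      using that kp ks
      by (intro has_vector_derivative_diff has_vector_derivative_mult_right
          has_vector_derivative_scaled_arg has_vector_derivative_hankel_sq') simp_all
  qed (simp add: power4_eq_xxxx power2_eq_square mult_ac)
qed

section \<open>The coefficients of \<open>I\<close> and \<open>x x^T\<close>\<close>

text \<open>For \<open>k = omega^2 rho\<close> and \<open>q = |x|^2\<close> the arguments \<open>k / mu * q\<close> and \<open>k / nu * q\<close>
  are \<open>(k_s |x|)^2\<close> and \<open>(k_p |x|)^2\<close>, with \<open>nu = 2 mu + lambda\<close>.\<close>

definition hankel_coeff_I ::
    "(real \<Rightarrow> complex) \<Rightarrow> (real \<Rightarrow> complex) \<Rightarrow> real \<Rightarrow> real \<Rightarrow> real \<Rightarrow> real \<Rightarrow> complex" where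
  "hankel_coeff_I h h' mu nu q k =
     - \<i> / (4*mu) * h (k / mu * q) + \<i> / 2 * (h' (k / nu * q) / nu - h' (k / mu * q) / mu)"

definition hankel_coeff_xx :: "(real \<Rightarrow> complex) \<Rightarrow> real \<Rightarrow> real \<Rightarrow> real \<Rightarrow> real \<Rightarrow> complex" where
  "hankel_coeff_xx h'' mu nu q k = \<i> * k * (h'' (k / nu * q) / nu^2 - h'' (k / mu * q) / mu^2)"

lemma hankel_coeff_I_diff:
  "hankel_coeff_I h h' mu nu q k - hankel_coeff_I g g' mu nu q k
     = hankel_coeff_I (\<lambda>u. h u - g u) (\<lambda>u. h' u - g' u) mu nu q k"
  by (simp add: hankel_coeff_I_def diff_divide_distrib algebra_simps)

lemma hankel_coeff_xx_diff:
  "hankel_coeff_xx h mu nu q k - hankel_coeff_xx g mu nu q k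
     = hankel_coeff_xx (\<lambda>u. h u - g u) mu nu q k"
  by (simp add: hankel_coeff_xx_def diff_divide_distrib algebra_simps)

lemma Gamma_omega_eq:
  fixes x :: "real^2"
  assumes mu: "mu > 0" and nu: "2*mu + lam > 0" and rho: "rho > 0" and w: "w > 0" and x: "x \<noteq> 0"
  shows "Gamma_omega lam mu rho w x =
      cscale (hankel_coeff_I hankel_sq hankel_sq' mu (2*mu + lam) ((norm x)^2) (w^2 * rho)) Imat
    + cscale (hankel_coeff_xx hankel_sq'' mu (2*mu + lam) ((norm x)^2) (w^2 * rho)) (outer x)"
proof -
  define nu where "nu = 2*mu + lam"
  define ks kp where "ks = k_s lam mu rho w" and "kp = k_p lam mu rho w"
  have nu_pos: "nu > 0"
    using nu by (simp add: nu_def)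
  have k2: "ks^2 = w^2 * rho / mu" "kp^2 = w^2 * rho / nu" "ks > 0" "kp > 0"
    using mu nu rho w by (simp_all add: ks_def kp_def k_s_def k_p_def nu_def power_divide add.commute)
  have k4: "ks^4 = (w^2 * rho / mu)^2" "kp^4 = (w^2 * rho / nu)^2"
    unfolding k2(1,2)[symmetric] by simp_all
  have coeff_I: "- \<i> / (4*mu) * hankel_sq (ks^2 * (x \<bullet> x))
      + \<i> / (4 * w^2 * rho) * (2 * (of_real (kp^2) * hankel_sq' (kp^2 * (x \<bullet> x))
                                    - of_real (ks^2) * hankel_sq' (ks^2 * (x \<bullet> x))))
      = hankel_coeff_I hankel_sq hankel_sq' mu nu (x \<bullet> x) (w^2 * rho)"
    unfolding hankel_coeff_I_def k2(1,2) using mu nu_pos rho w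
    by (simp add: field_simps)
  have coeff_xx: "\<i> / (4 * w^2 * rho) * (4 * (of_real (kp^4) * hankel_sq'' (kp^2 * (x \<bullet> x))
                                           - of_real (ks^4) * hankel_sq'' (ks^2 * (x \<bullet> x))))
      = hankel_coeff_xx hankel_sq'' mu nu (x \<bullet> x) (w^2 * rho)"
    unfolding hankel_coeff_xx_def k2(1,2) k4 using mu nu_pos rho w
    by (simp add: field_simps power2_eq_square)
  show ?thesis
    unfolding Gamma_omega_def ks_def[symmetric] kp_def[symmetric] nu_def[symmetric]
      hessian2_hankel10_diff[OF k2(4,3) x] hankel10_radial[OF k2(3) x] power2_norm_eq_inner
      coeff_I[symmetric] coeff_xx[symmetric]
    by (simp add: vec_eq_iff cscale_def algebra_simps)
qed

definition expansion_coeff_I :: "real \<Rightarrow> real \<Rightarrow> real \<Rightarrow> real \<Rightarrow> real^2 \<Rightarrow> complex" where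
  "expansion_coeff_I lam mu rho w x = alpha1 lam mu * ln (norm x) + gamma_omega lam mu rho w
     + w^2 * rho * (ln w + ln (sqrt rho)) * beta2 lam mu * (norm x)^2
     + w^2 * rho * (beta1 lam mu + beta2 lam mu * ln (norm x)) * (norm x)^2"

definition expansion_coeff_xx :: "real \<Rightarrow> real \<Rightarrow> real \<Rightarrow> real \<Rightarrow> real^2 \<Rightarrow> complex" where
  "expansion_coeff_xx lam mu rho w x = - alpha2 lam mu / (norm x)^2
     + w^2 * rho * (ln w + ln (sqrt rho)) * beta3 lam mu
     + w^2 * rho * (beta3 lam mu * ln (norm x) + beta4 lam mu)"

lemma expansion_eq:
  "Gamma0 lam mu x
     + cscale (gamma_omega lam mu rho w) Imat
     + cscale (w^2 * ln w * rho) (Gamma1 lam mu x)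
     + cscale (w^2 * rho * ln (sqrt rho)) (Gamma1 lam mu x)
     + cscale (w^2 * rho) (Gamma2 lam mu x)
   = cscale (expansion_coeff_I lam mu rho w x) Imat + cscale (expansion_coeff_xx lam mu rho w x) (outer x)"
  by (simp add: vec_eq_iff Gamma0_def Gamma1_def Gamma2_def expansion_coeff_I_def expansion_coeff_xx_def
      cscale_def Imat_def mat_def outer_def algebra_simps)

section \<open>Small-argument truncations\<close>

text \<open>The \<open>1/u\<close> and \<open>1/u^2\<close> terms are the singular parts of \<open>P(u)/(2u)\<close> and \<open>-P(u)/(2u^2)\<close>.
  In \<open>hankel_coeff_I\<close> the \<open>1/u\<close> terms cancel between the two wave speeds; in \<open>hankel_coeff_xx\<close>
  the \<open>1/u^2\<close> terms cancel and the \<open>1/u\<close> terms produce the \<open>x x^T / |x|^2\<close> term of \<open>Gamma0\<close>.\<close>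

definition hankel_sq_approx :: "real \<Rightarrow> complex" where
  "hankel_sq_approx u = hankel_comb (bessel_log u) (1 - u/4) (u/4)"

definition hankel_sq'_approx :: "real \<Rightarrow> complex" where
  "hankel_sq'_approx u = hankel_comb (bessel_log u) (u/32 - 1/4) (1/(2*u) + 1/8 - 5*u/128)"

definition hankel_sq''_approx :: "real \<Rightarrow> complex" where
  "hankel_sq''_approx u = hankel_comb (bessel_log u) (1/32) (- 1/(2*u^2) - 1/(8*u) - 3/128)"

lemma Ec_eq: "Ec = complex_of_real (2 * (euler_mascheroni - ln 2)) - \<i> * complex_of_real pi"
proof -
  have "(ln 2 :: complex) = complex_of_real (ln 2)"
    using Ln_of_real[of 2] by simp
  moreover have "(euler_mascheroni :: complex) = complex_of_real euler_mascheroni"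
    by (rule of_real_euler_mascheroni[symmetric])
  ultimately show ?thesis
    unfolding Ec_def by (simp add: algebra_simps)
qed

lemma hankel_coeff_I_approx:
  assumes mu: "mu > 0" and nu: "2*mu + lam > 0" and rho: "rho > 0" and w: "w > 0" and x: "x \<noteq> 0"
  shows "hankel_coeff_I hankel_sq_approx hankel_sq'_approx mu (2*mu + lam) ((norm x)^2) (w^2 * rho)
    = expansion_coeff_I lam mu rho w x"
proof -
  define nu where "nu = 2*mu + lam"
  define S where "S = w^2 * rho * (norm x)^2"
  define L where "L = ln w + ln (sqrt rho) + ln (norm x)"
  have nu_pos: "nu > 0"
    using nu by (simp add: nu_def)
  have S_pos: "S > 0"
    using w rho x by (simp add: S_def)
  have arg: "w^2 * rho / c * (norm x)^2 = S / c" for c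
    by (simp add: S_def)
  have log: "bessel_log (S / c) = L - ln c / 2 - ln 2 + euler_mascheroni" if "c > 0" for c
    using that w rho x by (simp add: bessel_log_def S_def L_def ln_mult ln_div ln_sqrt ln_realpow)
  have rhs: "expansion_coeff_I lam mu rho w x
      = alpha1 lam mu * L + alpha_c lam mu + S * (beta2 lam mu * L + beta1 lam mu)"
    using w rho by (simp add: expansion_coeff_I_def gamma_omega_def S_def L_def ln_mult algebra_simps)
  show ?thesis
    unfolding hankel_coeff_I_def hankel_sq_approx_def hankel_sq'_approx_def arg rhs
      alpha_c_def alpha1_def alpha2_def beta1_def beta2_def beta3_def Ec_eq nu_def[symmetric]
      log[OF mu] log[OF nu_pos]
    using mu nu_pos S_pos
    by (simp add: complex_eq_iff hankel_comb_def) (simp add: field_simps power2_eq_square)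
qed

lemma hankel_coeff_xx_approx:
  assumes mu: "mu > 0" and nu: "2*mu + lam > 0" and rho: "rho > 0" and w: "w > 0" and x: "x \<noteq> 0"
  shows "hankel_coeff_xx hankel_sq''_approx mu (2*mu + lam) ((norm x)^2) (w^2 * rho)
    = expansion_coeff_xx lam mu rho w x"
proof -
  define nu where "nu = 2*mu + lam"
  define K where "K = w^2 * rho"
  define Q where "Q = (norm x)^2"
  define L where "L = ln w + ln (sqrt rho) + ln (norm x)"
  have nu_pos: "nu > 0"
    using nu by (simp add: nu_def)
  have K_pos: "K > 0" and Q_pos: "Q > 0"
    using w rho x by (simp_all add: K_def Q_def)
  have log: "bessel_log (K / c * Q) = L - ln c / 2 - ln 2 + euler_mascheroni" if "c > 0" for c
    using that w rho x by (simp add: bessel_log_def K_def Q_def L_def ln_mult ln_div ln_sqrt ln_realpow)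
  have rhs: "expansion_coeff_xx lam mu rho w x = - alpha2 lam mu / Q + K * (beta3 lam mu * L + beta4 lam mu)"
    using w rho by (simp add: expansion_coeff_xx_def K_def Q_def L_def algebra_simps)
  show ?thesis
    unfolding hankel_coeff_xx_def hankel_sq''_approx_def K_def[symmetric] Q_def[symmetric] rhs
      alpha2_def beta3_def beta4_def Ec_eq nu_def[symmetric] log[OF mu] log[OF nu_pos]
    using mu nu_pos K_pos Q_pos
    by (simp add: complex_eq_iff hankel_comb_def) (simp add: field_simps power2_eq_square)
qed

section \<open>Remainder estimates\<close>

lemma hankel_comb_bigo:
  fixes A B :: "real \<Rightarrow> real"
  assumes A: "A \<in> O[at_right 0](\<lambda>u. u^n)" and B: "B \<in> O[at_right 0](\<lambda>u. u^n)"
  shows "(\<lambda>u. hankel_comb (bessel_log u) (A u) (B u)) \<in> O[at_right 0](\<lambda>u. of_real (u^n * ln u))"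
proof -
  have one: "(\<lambda>_. 1) \<in> O[at_right 0](\<lambda>u::real. ln u)"
    by real_asymp
  have log: "bessel_log \<in> O[at_right 0](\<lambda>u. ln u)"
    unfolding bessel_log_def[abs_def] by real_asymp
  have A': "A \<in> O[at_right 0](\<lambda>u. u^n * ln u)"
    by (rule landau_o.big_mult_1[OF A one])
  have "(\<lambda>u. A u * bessel_log u + B u) \<in> O[at_right 0](\<lambda>u. u^n * ln u)"
    by (rule sum_in_bigo(1)[OF landau_o.big.mult[OF A log] landau_o.big_mult_1[OF B one]])
  then have "(\<lambda>u. bessel_log u * A u + B u) \<in> O[at_right 0](\<lambda>u. u^n * ln u)"
    by (simp only: mult.commute)
  then have Y: "(\<lambda>u. 2 / pi * (bessel_log u * A u + B u)) \<in> O[at_right 0](\<lambda>u. u^n * ln u)"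
    by (rule landau_o.big.cmult_in_iff[THEN iffD2, rotated]) simp
  show ?thesis
    unfolding hankel_comb_def
    by (intro sum_in_bigo(1) landau_o.big.of_real_iff[THEN iffD2] A' Y
        landau_o.big.cmult_in_iff[OF complex_i_not_zero, THEN iffD2])
qed

lemma hankel_sq_remainder:
  "(\<lambda>u. hankel_sq u - hankel_sq_approx u) \<in> O[at_right 0](\<lambda>u. of_real (u^2 * ln u))"
proof -
  have eq: "hankel_sq u - hankel_sq_approx u = hankel_comb (bessel_log u)
      (pser j0_coeff u - (\<Sum>n<2. j0_coeff n * u^n)) (pser y0_coeff u - (\<Sum>n<2. y0_coeff n * u^n))" for u
    by (simp add: hankel_sq_def hankel_sq_approx_def hankel_comb_diff bessel_partial_sums)
  show ?thesis
    unfolding eq by (intro hankel_comb_bigo pser_remainder_bigo entire_bessel_coeffs)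
qed

lemma hankel_sq'_remainder:
  "(\<lambda>u. hankel_sq' u - hankel_sq'_approx u) \<in> O[at_right 0](\<lambda>u. of_real (u^2 * ln u))"
proof -
  let ?A = "\<lambda>u. pser (diffs j0_coeff) u - (\<Sum>n<2. diffs j0_coeff n * u^n)"
  let ?B = "\<lambda>u. (pser j0_coeff u - (\<Sum>n<3. j0_coeff n * u^n)) / (2*u)
      + (pser (diffs y0_coeff) u - (\<Sum>n<2. diffs y0_coeff n * u^n))"
  have "(\<lambda>u. (pser j0_coeff u - (\<Sum>n<3. j0_coeff n * u^n)) / (2*u)) \<in> O[at_right 0](\<lambda>u. u^2)"
    using pser_remainder_div_bigo[OF entire_j0_coeff, of 2 1 3] by simp
  then have B: "?B \<in> O[at_right 0](\<lambda>u. u^2)"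
    by (intro sum_in_bigo pser_remainder_bigo entire_bessel_coeffs)
  have "\<forall>\<^sub>F u in at_right 0. hankel_comb (bessel_log u) (?A u) (?B u) = hankel_sq' u - hankel_sq'_approx u"
  proof (rule eventually_mono[OF eventually_at_right_less])
    fix u :: real
    assume "u > 0"
    then show "hankel_comb (bessel_log u) (?A u) (?B u) = hankel_sq' u - hankel_sq'_approx u"
      unfolding hankel_sq'_def hankel_sq'_approx_def hankel_comb_diff bessel_partial_sums
      by (intro arg_cong2[where f = "hankel_comb (bessel_log u)"]) (simp_all add: field_simps power2_eq_square)
  qed
  from landau_o.big.in_cong[OF this]
  show ?thesis
    using hankel_comb_bigo[OF pser_remainder_bigo[OF entire_bessel_coeffs(3)] B] by simp
qed

lemma hankel_sq''_remainder:
  "(\<lambda>u. hankel_sq'' u - hankel_sq''_approx u) \<in> O[at_right 0](\<lambda>u. of_real (u * ln u))"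
proof -
  let ?A = "\<lambda>u. pser (diffs (diffs j0_coeff)) u - (\<Sum>n<1. diffs (diffs j0_coeff) n * u^n)"
  let ?B = "\<lambda>u. (pser (diffs j0_coeff) u - (\<Sum>n<2. diffs j0_coeff n * u^n)) / u
      - (pser j0_coeff u - (\<Sum>n<3. j0_coeff n * u^n)) / (2*u^2)
      + (pser (diffs (diffs y0_coeff)) u - (\<Sum>n<1. diffs (diffs y0_coeff) n * u^n))"
  have B1: "(\<lambda>u. (pser (diffs j0_coeff) u - (\<Sum>n<2. diffs j0_coeff n * u^n)) / u) \<in> O[at_right 0](\<lambda>u. u)"
    using pser_remainder_div_bigo[OF entire_bessel_coeffs(3), of 1 1 2] by simp
  have B2: "(\<lambda>u. (pser j0_coeff u - (\<Sum>n<3. j0_coeff n * u^n)) / (2*u^2)) \<in> O[at_right 0](\<lambda>u. u)"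
    using pser_remainder_div_bigo[OF entire_j0_coeff, of 2 2 3] by simp
  have B3: "(\<lambda>u. pser (diffs (diffs y0_coeff)) u - (\<Sum>n<1. diffs (diffs y0_coeff) n * u^n))
      \<in> O[at_right 0](\<lambda>u. u)"
    using pser_remainder_bigo[OF entire_bessel_coeffs(6), of 1] by simp
  have B: "?B \<in> O[at_right 0](\<lambda>u. u^1)"
    unfolding power_one_right by (intro sum_in_bigo B1 B2 B3)
  have "\<forall>\<^sub>F u in at_right 0. hankel_comb (bessel_log u) (?A u) (?B u) = hankel_sq'' u - hankel_sq''_approx u"
  proof (rule eventually_mono[OF eventually_at_right_less])
    fix u :: real
    assume "u > 0"
    then show "hankel_comb (bessel_log u) (?A u) (?B u) = hankel_sq'' u - hankel_sq''_approx u"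
      unfolding hankel_sq''_def hankel_sq''_approx_def hankel_comb_diff bessel_partial_sums
      by (intro arg_cong2[where f = "hankel_comb (bessel_log u)"]) (simp_all add: field_simps power2_eq_square)
  qed
  from landau_o.big.in_cong[OF this]
  show ?thesis
    using hankel_comb_bigo[OF pser_remainder_bigo[OF entire_bessel_coeffs(5)] B] by simp
qed

lemma bigo_compose_sq_scaled:
  fixes f :: "real \<Rightarrow> complex"
  assumes f: "f \<in> O[at_right 0](\<lambda>u. of_real (u^n * ln u))" and a: "a > 0"
  shows "(\<lambda>w. f (w^2 * a)) \<in> O[at_right 0](\<lambda>w. of_real (w^(2*n) * ln w))"
proof -
  have "filterlim (\<lambda>w::real. w^2 * a) (at_right 0) (at_right 0)"
  proof (rule tendsto_imp_filterlim_at_right)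
    show "((\<lambda>w::real. w^2 * a) \<longlongrightarrow> 0) (at_right 0)"
      by (auto intro!: tendsto_eq_intros)
    show "\<forall>\<^sub>F w in at_right 0. w^2 * a > 0"
      using eventually_at_right_less by eventually_elim (use a in simp)
  qed
  then have composed: "(\<lambda>w. f (w^2 * a)) \<in> O[at_right 0](\<lambda>w. of_real ((w^2 * a)^n * ln (w^2 * a)))"
    by (rule landau_o.big.compose[OF f])
  have "(\<lambda>w. 2 * ln w + ln a) \<in> O[at_right 0](\<lambda>w. ln w)"
    by real_asymp
  then have "(\<lambda>w. w^(2*n) * (2 * ln w + ln a)) \<in> O[at_right 0](\<lambda>w. w^(2*n) * ln w)"
    by (rule landau_o.big.mult_left)
  then have bound: "(\<lambda>w. a^n * (w^(2*n) * (2 * ln w + ln a))) \<in> O[at_right 0](\<lambda>w. w^(2*n) * ln w)"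
    by (rule landau_o.big.cmult_in_iff[THEN iffD2, rotated]) (use a in simp)
  have "\<forall>\<^sub>F w in at_right 0. a^n * (w^(2*n) * (2 * ln w + ln a)) = (w^2 * a)^n * ln (w^2 * a)"
  proof (rule eventually_mono[OF eventually_at_right_less])
    fix w :: real
    assume w: "0 < w"
    have "(w^2 * a)^n = a^n * w^(2*n)"
      by (simp add: power_mult_distrib power_mult)
    moreover have "ln (w^2 * a) = 2 * ln w + ln a"
      using w a by (simp add: ln_mult ln_realpow)
    ultimately show "a^n * (w^(2*n) * (2 * ln w + ln a)) = (w^2 * a)^n * ln (w^2 * a)"
      by simp
  qed
  from landau_o.big.in_cong[OF this] bound
  have "(\<lambda>w. (w^2 * a)^n * ln (w^2 * a)) \<in> O[at_right 0](\<lambda>w. w^(2*n) * ln w)"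
    by (rule iffD1)
  then show ?thesis
    by (rule landau_o.big_trans[OF composed landau_o.big.of_real_iff[THEN iffD2]])
qed

lemma hankel_coeff_I_bigo:
  assumes R: "R \<in> O[at_right 0](\<lambda>u. of_real (u^2 * ln u))"
    and R': "R' \<in> O[at_right 0](\<lambda>u. of_real (u^2 * ln u))"
    and "mu > 0" "nu > 0" "q > 0" "rho > 0"
  shows "(\<lambda>w. hankel_coeff_I R R' mu nu q (w^2 * rho)) \<in> O[at_right 0](\<lambda>w. of_real (w^4 * ln w))"
proof -
  have scaled: "(\<lambda>w. S (w^2 * rho / c * q)) \<in> O[at_right 0](\<lambda>w. of_real (w^4 * ln w))"
    if "S \<in> O[at_right 0](\<lambda>u. of_real (u^2 * ln u))" "c > 0" for S :: "real \<Rightarrow> complex" and c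
    using bigo_compose_sq_scaled[OF that(1), of "rho / c * q"] that(2) assms(5,6)
    by (simp add: mult.assoc)
  show ?thesis
    unfolding hankel_coeff_I_def
    by (intro sum_in_bigo landau_o.big.cmult_in_iff[THEN iffD2] landau_o.big.cdiv_in_iff'[THEN iffD2]
        scaled R R') (use assms in auto)
qed

lemma hankel_coeff_xx_bigo:
  assumes R: "R \<in> O[at_right 0](\<lambda>u. of_real (u * ln u))"
    and "mu > 0" "nu > 0" "q > 0" "rho > 0"
  shows "(\<lambda>w. hankel_coeff_xx R mu nu q (w^2 * rho)) \<in> O[at_right 0](\<lambda>w. of_real (w^4 * ln w))"
proof -
  let ?X = "\<lambda>w. R (w^2 * rho / nu * q) / nu^2 - R (w^2 * rho / mu * q) / mu^2"
  have R1: "R \<in> O[at_right 0](\<lambda>u. of_real (u^1 * ln u))"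
    using R by simp
  have scaled: "(\<lambda>w. R (w^2 * rho / c * q)) \<in> O[at_right 0](\<lambda>w. of_real (w^2 * ln w))" if "c > 0" for c
    using bigo_compose_sq_scaled[OF R1, of "rho / c * q"] that assms(4,5)
    by (simp add: mult.assoc)
  have "?X \<in> O[at_right 0](\<lambda>w. of_real (w^2 * ln w))"
    by (intro sum_in_bigo landau_o.big.cdiv_in_iff'[THEN iffD2] scaled) (use assms in auto)
  then have "(\<lambda>w. (\<i> * rho) * (of_real (w^2) * ?X w))
      \<in> O[at_right 0](\<lambda>w. of_real (w^2) * of_real (w^2 * ln w))"
    by (intro landau_o.big.cmult_in_iff[THEN iffD2] landau_o.big.mult_left) (use assms in auto)
  moreover have "(\<lambda>w. hankel_coeff_xx R mu nu q (w^2 * rho)) = (\<lambda>w. (\<i> * rho) * (of_real (w^2) * ?X w))"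
    by (simp add: hankel_coeff_xx_def fun_eq_iff mult_ac)
  moreover have "(\<lambda>w. of_real (w^2) * of_real (w^2 * ln w)) = (\<lambda>w::real. complex_of_real (w^4 * ln w))"
    by (simp add: fun_eq_iff power2_eq_square power4_eq_xxxx mult_ac)
  ultimately show ?thesis
    by simp
qed

lemma norm_cscale: "norm (cscale c A) = cmod c * norm A"
  unfolding norm_vec_def cscale_def
  by (simp add: norm_mult L2_set_right_distrib)

lemma norm_cscale_sum_bigo:
  assumes a: "a \<in> O[F](\<lambda>w. of_real (g w))" and b: "b \<in> O[F](\<lambda>w. of_real (g w))"
  shows "(\<lambda>w. norm (cscale (a w) A + cscale (b w) B)) \<in> O[F](g)"
proof -
  have le: "(\<lambda>w. norm (cscale (a w) A + cscale (b w) B)) \<in> O[F](\<lambda>w. cmod (a w) * norm A + cmod (b w) * norm B)"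
  proof (rule bigoI[where c = 1], rule always_eventually, rule allI)
    fix w
    have "norm (cscale (a w) A + cscale (b w) B) \<le> cmod (a w) * norm A + cmod (b w) * norm B"
      using norm_triangle_ineq[of "cscale (a w) A" "cscale (b w) B"] by (simp add: norm_cscale)
    then show "norm (norm (cscale (a w) A + cscale (b w) B)) \<le> 1 * norm (cmod (a w) * norm A + cmod (b w) * norm B)"
      by simp
  qed
  have "(\<lambda>w. cmod (a w)) \<in> O[F](\<lambda>w. norm (complex_of_real (g w)))"
    "(\<lambda>w. cmod (b w)) \<in> O[F](\<lambda>w. norm (complex_of_real (g w)))"
    using a b by (simp_all only: landau_o.big.norm_iff)
  then have "(\<lambda>w. cmod (a w)) \<in> O[F](g)" "(\<lambda>w. cmod (b w)) \<in> O[F](g)"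
    by simp_all
  then have "(\<lambda>w. cmod (a w) * norm A + cmod (b w) * norm B) \<in> O[F](g)"
    by (intro sum_in_bigo) simp_all
  with le show ?thesis
    by (rule landau_o.big_trans)
qed

lemma Gamma_omega_remainder_eq:
  assumes "mu > 0" "2*mu + lam > 0" "rho > 0" "w > 0" "x \<noteq> 0"
  shows "Gamma_omega lam mu rho w x
      - (Gamma0 lam mu x
         + cscale (gamma_omega lam mu rho w) Imat
         + cscale (w^2 * ln w * rho) (Gamma1 lam mu x)
         + cscale (w^2 * rho * ln (sqrt rho)) (Gamma1 lam mu x)
         + cscale (w^2 * rho) (Gamma2 lam mu x))
    = cscale (hankel_coeff_I (\<lambda>u. hankel_sq u - hankel_sq_approx u) (\<lambda>u. hankel_sq' u - hankel_sq'_approx u)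
        mu (2*mu + lam) ((norm x)^2) (w^2 * rho)) Imat
      + cscale (hankel_coeff_xx (\<lambda>u. hankel_sq'' u - hankel_sq''_approx u)
        mu (2*mu + lam) ((norm x)^2) (w^2 * rho)) (outer x)"
  unfolding Gamma_omega_eq[OF assms] expansion_eq hankel_coeff_I_diff[symmetric] hankel_coeff_xx_diff[symmetric]
    hankel_coeff_I_approx[OF assms] hankel_coeff_xx_approx[OF assms]
  by (simp add: vec_eq_iff cscale_def algebra_simps)

theorem proposition2p2:
  fixes lam mu rho :: real and x :: "real^2"
  assumes "mu > 0" and "2*mu + lam > 0" and "rho > 0" and "x \<noteq> 0"
  shows "(\<lambda>\<omega>. norm (Gamma_omega lam mu rho \<omega> x
            - (Gamma0 lam mu x
               + cscale (gamma_omega lam mu rho \<omega>) Imat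
               + cscale (\<omega>^2 * ln \<omega> * rho) (Gamma1 lam mu x)
               + cscale (\<omega>^2 * rho * ln (sqrt rho)) (Gamma1 lam mu x)
               + cscale (\<omega>^2 * rho) (Gamma2 lam mu x))))
         \<in> O[at_right 0](\<lambda>\<omega>. \<omega>^4 * ln \<omega> + \<omega>^4)"
proof -
  define cI where "cI w = hankel_coeff_I (\<lambda>u. hankel_sq u - hankel_sq_approx u)
    (\<lambda>u. hankel_sq' u - hankel_sq'_approx u) mu (2*mu + lam) ((norm x)^2) (w^2 * rho)" for w
  define cxx where "cxx w = hankel_coeff_xx (\<lambda>u. hankel_sq'' u - hankel_sq''_approx u)
    mu (2*mu + lam) ((norm x)^2) (w^2 * rho)" for w
  have "(\<lambda>w. norm (cscale (cI w) Imat + cscale (cxx w) (outer x))) \<in> O[at_right 0](\<lambda>w. w^4 * ln w)"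
    unfolding cI_def cxx_def using assms
    by (intro norm_cscale_sum_bigo hankel_coeff_I_bigo hankel_coeff_xx_bigo
        hankel_sq_remainder hankel_sq'_remainder hankel_sq''_remainder) simp_all
  moreover have "(\<lambda>w::real. w^4 * ln w) \<in> O[at_right 0](\<lambda>w. w^4 * ln w + w^4)"
    by real_asymp
  ultimately have "(\<lambda>w. norm (cscale (cI w) Imat + cscale (cxx w) (outer x)))
      \<in> O[at_right 0](\<lambda>w. w^4 * ln w + w^4)"
    by (rule landau_o.big_trans)
  then show ?thesis
    by (rule landau_o.big.in_cong[THEN iffD1, rotated], intro eventually_mono[OF eventually_at_right_less])
       (simp only: Gamma_omega_remainder_eq[OF assms(1-3) _ assms(4)] cI_def cxx_def)
qed

end
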